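(* Let $n\ge 2$ and let $\mathcal{S}_n$ be the star graph with vertices $x_0,x_1,\dots,x_n$ and edges $\{x_0,x_k\}$, $k=1,\dots,n$; let $S=\Bbbk[x_0,\dots,x_n]$. Then for all $i\ge 1$, $$b_{i,n+1}(S/I_3(\mathcal{S}_n))=\begin{cases} i & \text{if } n+1=i+2,\\ 0&\text{otherwise.}\end{cases}$$
   Context: $\Bbbk$ is a field. $I_3(G)$ is the path ideal generated by all monomials $xyz$ where $x,y,z$ are distinct vertices with $\{x,y\}$ and $\{y,z\}$ edges; for $\mathcal{S}_n$ it is generated by $x_0x_jx_k$, $1\le j<k\le n$. $b_{i,j}(S/I)=\dim_\Bbbk\operatorname{Tor}^S_i(S/I,\Bbbk)_j$. *)

theory Defs
  imports Main "HOL.Vector_Spaces" "HOL-Library.Function_Algebras"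
begin

text \<open>Monomials in the variables x_v (v a nat) are exponent vectors nat \<Rightarrow> nat.
  A monomial ideal is given by a set of monomial generators.\<close>

definition mono_supp :: "nat set \<Rightarrow> (nat \<Rightarrow> nat) \<Rightarrow> bool" where
  "mono_supp V m \<longleftrightarrow> (\<forall>v. v \<notin> V \<longrightarrow> m v = 0)"

definition mono_deg :: "nat set \<Rightarrow> (nat \<Rightarrow> nat) \<Rightarrow> nat" where
  "mono_deg V m = (\<Sum>v\<in>V. m v)"

definition in_mono_ideal :: "(nat \<Rightarrow> nat) set \<Rightarrow> (nat \<Rightarrow> nat) \<Rightarrow> bool" where
  "in_mono_ideal Gs m \<longleftrightarrow> (\<exists>g\<in>Gs. \<forall>v. g v \<le> m v)"

definition sqfree_mono :: "nat set \<Rightarrow> (nat \<Rightarrow> nat)" where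
  "sqfree_mono A = (\<lambda>v. if v \<in> A then 1 else 0)"

definition path3_gens :: "nat set \<Rightarrow> (nat \<Rightarrow> nat \<Rightarrow> bool) \<Rightarrow> (nat \<Rightarrow> nat) set" where
  "path3_gens V E = {sqfree_mono {x, y, z} | x y z.
      x \<in> V \<and> y \<in> V \<and> z \<in> V \<and> x \<noteq> y \<and> y \<noteq> z \<and> x \<noteq> z \<and> E x y \<and> E y z}"

definition star_edge :: "nat \<Rightarrow> nat \<Rightarrow> nat \<Rightarrow> bool" where
  "star_edge n a b \<longleftrightarrow> (a = 0 \<and> b \<in> {1..n}) \<or> (b = 0 \<and> a \<in> {1..n})"

text \<open>Graded Betti numbers b_{i,j}(S/I) = dim_k Tor_i^S(S/I,k)_j, where
  S = k[x_v | v \<in> V] and I is the monomial ideal generated by Gs.  Tor is computed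
  by tensoring S/I with the Koszul complex K(x_v : v\<in>V), the minimal free
  S-resolution of k.  The degree-j part of (S/I) \<otimes> K_i has k-basis the pairs
  (m, F) with m a monomial not in I, F \<subseteq> V, card F = i, deg m + i = j.\<close>

definition kbasis :: "nat set \<Rightarrow> (nat \<Rightarrow> nat) set \<Rightarrow> nat \<Rightarrow> nat \<Rightarrow> ((nat \<Rightarrow> nat) \<times> nat set) set" where
  "kbasis V Gs i j = {(m, F). mono_supp V m \<and> \<not> in_mono_ideal Gs m \<and> F \<subseteq> V
       \<and> card F = i \<and> mono_deg V m + i = j}"

definition kchains :: "'k::field itself \<Rightarrow> nat set \<Rightarrow> (nat \<Rightarrow> nat) set \<Rightarrow> nat \<Rightarrow> nat
    \<Rightarrow> (((nat \<Rightarrow> nat) \<times> nat set) \<Rightarrow> 'k) set" where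
  "kchains _ V Gs i j = {c. \<forall>b. b \<notin> kbasis V Gs i j \<longrightarrow> c b = 0}"

text \<open>Koszul differential d(m \<otimes> e_F) = \<Sum>_{f\<in>F} (-1)^{#\{g\<in>F. g<f\}} (x_f m) \<otimes> e_{F-{f}},
  where x_f m is zero in S/I when it lies in I.  Written coefficientwise.\<close>
definition kdiff :: "nat set \<Rightarrow> (nat \<Rightarrow> nat) set \<Rightarrow> nat \<Rightarrow> nat
    \<Rightarrow> (((nat \<Rightarrow> nat) \<times> nat set) \<Rightarrow> 'k::field) \<Rightarrow> (((nat \<Rightarrow> nat) \<times> nat set) \<Rightarrow> 'k)" where
  "kdiff V Gs i j c = (\<lambda>(m', G).
     if i = 0 \<or> (m', G) \<notin> kbasis V Gs (i - 1) j then 0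
     else (\<Sum>f\<in>{f\<in>V - G. 1 \<le> m' f \<and> (m'(f := m' f - 1), insert f G) \<in> kbasis V Gs i j}.
             (-1) ^ card {g\<in>G. g < f} * c (m'(f := m' f - 1), insert f G)))"

definition kscale :: "'k::field \<Rightarrow> ('b \<Rightarrow> 'k) \<Rightarrow> ('b \<Rightarrow> 'k)" where
  "kscale a c = (\<lambda>x. a * c x)"

definition betti :: "'k::field itself \<Rightarrow> nat set \<Rightarrow> (nat \<Rightarrow> nat) set \<Rightarrow> nat \<Rightarrow> nat \<Rightarrow> nat" where
  "betti K V Gs i j =
     vector_space.dim (kscale :: 'k \<Rightarrow> _)
        {c \<in> kchains K V Gs i j. (kdiff V Gs i j c :: _ \<Rightarrow> 'k) = (\<lambda>_. 0)}
   - vector_space.dim (kscale :: 'k \<Rightarrow> _)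
        ((kdiff V Gs (i + 1) j :: _ \<Rightarrow> _ \<Rightarrow> 'k) ` kchains K V Gs (i + 1) j)"

end

(* Tor_i(S/I, k) in degree n + 1 is the homology of the degree n + 1 strand of the Koszul
   complex S/I \<otimes> K(x_0, ..., x_n), and this strand splits by multidegree.  On the
   multidegree alpha of m \<otimes> e_F a pivot variable x_v with alpha_v >= 1 gives the usual
   contracting homotopy of the Koszul complex, moving x_v from the monomial into the exterior
   part.  Over S/I it still reproduces every cycle z at m \<otimes> e_F, except when v \<in> F and
   x_v m \<in> I.  For the star graph, with a suitable pivot, these exceptions are exactly the n - 1
   elements x_0 x_k \<otimes> e_{V - {0,k}}, 2 <= k <= n, all in homological degree n - 1.  Every
   chain supported on them is a cycle, and the boundary relations at x_0 x_1 and x_1 x_k show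
   that no nonzero boundary is supported on them, so b_{i,n+1} = n - 1 = i for i = n - 1 and
   b_{i,n+1} = 0 otherwise. *)

theory Submission
  imports Defs "HOL-Library.Indicator_Function"
begin

section \<open>Finitely supported coefficient functions\<close>

interpretation kscale: vector_space "kscale :: 'k::field \<Rightarrow> ('b \<Rightarrow> 'k) \<Rightarrow> ('b \<Rightarrow> 'k)"
  by unfold_locales (auto simp: kscale_def algebra_simps fun_eq_iff)

lemma sum_fun_apply: "(\<Sum>x\<in>A. f x) y = (\<Sum>x\<in>A. f x y)"
  by (induction A rule: infinite_finite_induct) auto

lemma (in vector_space) independent_Un_span_disjoint:
  assumes A: "independent A" and D: "independent D" and disj: "span A \<inter> span D \<subseteq> {0}"
  shows "independent (A \<union> D)"
  unfolding independent_explicit_module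
proof (intro allI impI)
  fix t u v
  assume t: "finite t" "t \<subseteq> A \<union> D" "(\<Sum>v\<in>t. u v *s v) = 0" "v \<in> t"
  have "A \<inter> D \<subseteq> span A \<inter> span D" using span_base by blast
  hence AD: "A \<inter> D = {}" using disj A dependent_zero by blast
  define a where "a = (\<Sum>v\<in>t \<inter> A. u v *s v)"
  define d where "d = (\<Sum>v\<in>t \<inter> D. u v *s v)"
  have "t = (t \<inter> A) \<union> (t \<inter> D)" using t(2) by blast
  hence "a + d = 0"
    using t(1,3) AD sum.union_disjoint[of "t \<inter> A" "t \<inter> D" "\<lambda>v. u v *s v"]
    unfolding a_def d_def by auto
  moreover have "a \<in> span A" "d \<in> span D"
    unfolding a_def d_def by (intro span_sum span_scale span_base; auto)+
  ultimately have "d \<in> span A \<inter> span D"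
    by (metis IntI add_eq_0_iff span_neg)
  hence "d = 0" "a = 0" using disj \<open>a + d = 0\<close> by auto
  show "u v = 0"
  proof (cases "v \<in> A")
    case True
    with t \<open>a = 0\<close> show ?thesis
      using independentD[OF A, of "t \<inter> A" u v] unfolding a_def by auto
  next
    case False
    with t \<open>d = 0\<close> show ?thesis
      using independentD[OF D, of "t \<inter> D" u v] unfolding d_def by auto
  qed
qed

lemma (in vector_space) dim_sum_span_independent:
  assumes B: "subspace B" "B \<subseteq> span T" "finite T" and D: "independent D" "finite D"
    and disj: "B \<inter> span D \<subseteq> {0}"
  shows "dim {x + y | x y. x \<in> B \<and> y \<in> span D} = dim B + card D"
proof -
  obtain A where A: "A \<subseteq> B" "independent A" "B \<subseteq> span A" "card A = dim B"
    using basis_exists by blast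
  have spanA: "span A = B" using span_subspace[OF A(1,3) B(1)] .
  have "finite A" using independent_span_bound[OF B(3) A(2)] A(1) B(2) by blast
  have indep: "independent (A \<union> D)"
    using independent_Un_span_disjoint[OF A(2) D(1)] disj spanA by simp
  have "A \<inter> D = {}"
  proof (rule ccontr)
    assume "A \<inter> D \<noteq> {}"
    then obtain x where "x \<in> A" "x \<in> D" by blast
    hence "x = 0" using A(1) span_base[of x D] disj by blast
    thus False using \<open>x \<in> A\<close> A(2) dependent_zero by blast
  qed
  have "dim {x + y | x y. x \<in> B \<and> y \<in> span D} = dim (span (A \<union> D))"
    by (simp only: span_Un spanA)
  also have "\<dots> = card A + card D"
    using dim_span_eq_card_independent[OF indep] card_Un_disjoint \<open>finite A\<close> D(2) \<open>A \<inter> D = {}\<close>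
    by simp
  finally show ?thesis using A(4) by simp
qed

lemma kscale_span_indicators:
  assumes "finite E"
  shows "kscale.span ((\<lambda>x::'a. indicator {x}) ` E) = {c :: 'a \<Rightarrow> 'k::field. \<forall>b. b \<notin> E \<longrightarrow> c b = 0}"
proof
  let ?S = "{c :: 'a \<Rightarrow> 'k. \<forall>b. b \<notin> E \<longrightarrow> c b = 0}"
  have "kscale.subspace ?S" by (rule kscale.subspaceI) (auto simp: kscale_def)
  moreover have "(\<lambda>x. indicator {x}) ` E \<subseteq> ?S" by (force split: split_indicator)
  ultimately show "kscale.span ((\<lambda>x. indicator {x}) ` E) \<subseteq> ?S"
    by (rule kscale.span_minimal[rotated])
  show "?S \<subseteq> kscale.span ((\<lambda>x. indicator {x}) ` E)"
  proof
    fix c assume c: "c \<in> ?S"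
    have "c = (\<Sum>x\<in>E. kscale (c x) (indicator {x}))"
    proof
      fix y
      have "(\<Sum>x\<in>E. kscale (c x) (indicator {x})) y = (\<Sum>x\<in>E. if x = y then c x else 0)"
        unfolding sum_fun_apply kscale_def by (rule sum.cong) auto
      thus "c y = (\<Sum>x\<in>E. kscale (c x) (indicator {x})) y"
        using c assms by simp
    qed
    also have "\<dots> \<in> kscale.span ((\<lambda>x. indicator {x}) ` E)"
      by (intro kscale.span_sum kscale.span_scale kscale.span_base) auto
    finally show "c \<in> kscale.span ((\<lambda>x. indicator {x}) ` E)" .
  qed
qed

lemma kscale_independent_indicators:
  "kscale.independent ((\<lambda>x::'a. indicator {x}) ` E :: ('a \<Rightarrow> 'k::field) set)"
  unfolding kscale.independent_explicit_module
proof (intro allI impI)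
  fix t u v
  assume t: "finite t" "t \<subseteq> ((\<lambda>x. indicator {x}) ` E :: ('a \<Rightarrow> 'k) set)"
    "(\<Sum>v\<in>t. kscale (u v) v) = 0" "v \<in> t"
  obtain x :: 'a where x: "v = indicator {x}" using t by auto
  have "0 = (\<Sum>v'\<in>t. u v' * v' x)" using fun_cong[OF t(3), of x] by (simp add: sum_fun_apply kscale_def)
  also have "\<dots> = u v * v x + (\<Sum>v'\<in>t - {v}. u v' * v' x)" using t by (simp add: sum.remove)
  also have "(\<Sum>v'\<in>t - {v}. u v' * v' x) = 0"
  proof (rule sum.neutral, rule ballI)
    fix v' assume "v' \<in> t - {v}"
    then obtain y where "v' = indicator {y}" "y \<noteq> x" using t x by auto
    thus "u v' * v' x = 0" by simp
  qed
  finally show "u v = 0" using x by simp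
qed

lemma card_indicators: "card ((\<lambda>x::'a. indicator {x}) ` E :: ('a \<Rightarrow> 'k::zero_neq_one) set) = card E"
proof (rule card_image, rule inj_onI)
  fix x y :: 'a assume "(indicator {x} :: 'a \<Rightarrow> 'k) = indicator {y}"
  hence "(indicator {x} :: 'a \<Rightarrow> 'k) x = indicator {y} x" by simp
  thus "x = y" by (auto split: split_indicator_asm)
qed

section \<open>The Koszul complex of a monomial quotient\<close>

lemma in_mono_ideal_mono:
  "in_mono_ideal Gs m \<Longrightarrow> (\<And>v. m v \<le> m' v) \<Longrightarrow> in_mono_ideal Gs m'"
  unfolding in_mono_ideal_def by (meson order_trans)

lemma mono_deg_fun_upd:
  assumes "finite V" "f \<in> V"
  shows "mono_deg V (m(f := x)) + m f = mono_deg V m + x"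
proof -
  have "mono_deg V (m(f := x)) = x + (\<Sum>v\<in>V - {f}. m v)"
    unfolding mono_deg_def using assms by (simp add: sum.remove)
  moreover have "mono_deg V m = m f + (\<Sum>v\<in>V - {f}. m v)"
    unfolding mono_deg_def using assms by (simp add: sum.remove)
  ultimately show ?thesis by simp
qed

lemma card_less_insert:
  assumes "finite F" "f \<notin> F"
  shows "card {g\<in>insert f F. g < v} = card {g\<in>F. g < v} + (if f < v then 1 else 0)"
proof (cases "f < v")
  case True
  hence "{g\<in>insert f F. g < v} = insert f {g\<in>F. g < v}" by auto
  thus ?thesis using assms True by simp
next
  case False
  hence "{g\<in>insert f F. g < v} = {g\<in>F. g < v}" by auto
  thus ?thesis using False by simp
qed

lemma card_less_remove:
  assumes "finite F" "v \<in> F"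
  shows "card {g\<in>F. g < f} = card {g\<in>F - {v}. g < f} + (if v < f then 1 else 0)"
  using card_less_insert[of "F - {v}" v f] assms by (simp add: insert_absorb)

lemma card_less_remove_self: "card {g\<in>F - {v}. g < v} = card {g\<in>F. g < (v::'a::order)}"
  by (rule arg_cong[where f = card]) auto

lemma minus_one_power_card_less_swap:
  fixes F :: "'a::linorder set"
  assumes "finite F" "v \<in> F" "f \<notin> F"
  shows "(-1::'k::comm_ring_1) ^ card {g\<in>F. g < f} * (-1) ^ card {g\<in>insert f F. g < v}
       = - ((-1) ^ card {g\<in>F. g < v} * (-1) ^ card {g\<in>F - {v}. g < f})"
proof -
  have "f \<noteq> v" using assms by auto
  thus ?thesis
    unfolding card_less_remove[OF assms(1,2), of f] card_less_insert[OF assms(1,3)]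
    by (cases "v < f") (simp_all add: power_add mult_ac)
qed

lemma sum_distinct_pairs_antisym:
  fixes g :: "'a \<Rightarrow> 'a \<Rightarrow> 'b::ab_group_add"
  assumes "finite A" "\<And>f f'. f \<in> A \<Longrightarrow> f' \<in> A \<Longrightarrow> f \<noteq> f' \<Longrightarrow> g f f' = - g f' f"
  shows "(\<Sum>f\<in>A. \<Sum>f'\<in>A - {f}. g f f') = 0"
  using assms
proof (induction A rule: finite_induct)
  case empty
  then show ?case by simp
next
  case (insert a A)
  have IH: "(\<Sum>f\<in>A. \<Sum>f'\<in>A - {f}. g f f') = 0" using insert.IH insert.prems by blast
  have "(\<Sum>f\<in>insert a A. \<Sum>f'\<in>insert a A - {f}. g f f')
      = (\<Sum>f'\<in>A. g a f') + (\<Sum>f\<in>A. g f a + (\<Sum>f'\<in>A - {f}. g f f'))"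
  proof -
    have "(\<Sum>f'\<in>insert a A - {f}. g f f') = g f a + (\<Sum>f'\<in>A - {f}. g f f')" if "f \<in> A" for f
    proof -
      have "insert a A - {f} = insert a (A - {f})" "a \<notin> A - {f}" using that insert.hyps by auto
      thus ?thesis using insert.hyps(1) by simp
    qed
    moreover have "insert a A - {a} = A" using insert.hyps by auto
    ultimately show ?thesis using insert.hyps by simp
  qed
  also have "(\<Sum>f\<in>A. g f a + (\<Sum>f'\<in>A - {f}. g f f')) = (\<Sum>f\<in>A. g f a)"
    using IH by (simp add: sum.distrib)
  also have "\<dots> = (\<Sum>f\<in>A. - g a f)"
    by (rule sum.cong) (use insert.prems insert.hyps in auto)
  finally show ?case by (simp add: sum_negf)
qed

definition multideg :: "(nat \<Rightarrow> nat) \<Rightarrow> nat set \<Rightarrow> nat \<Rightarrow> nat" where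
  "multideg m F = (\<lambda>w. m w + (if w \<in> F then 1 else 0))"

lemma multideg_insert_var:
  "f \<notin> F \<Longrightarrow> 1 \<le> m f \<Longrightarrow> multideg (m(f := m f - 1)) (insert f F) = multideg m F"
  unfolding multideg_def by auto

lemma sum_multideg:
  assumes "finite V" "(m, F) \<in> kbasis V Gs i j"
  shows "(\<Sum>w\<in>V. multideg m F w) = j"
proof -
  have F: "F \<subseteq> V" "card F = i" "mono_deg V m + i = j" using assms(2) by (auto simp: kbasis_def)
  have "(\<Sum>w\<in>V. multideg m F w) = mono_deg V m + card (V \<inter> F)"
    unfolding multideg_def mono_deg_def using assms(1) by (simp add: sum.distrib sum.If_cases)
  thus ?thesis using F by (simp add: Int_absorb1)
qed

lemma kdiff_outside_kbasis: "x \<notin> kbasis V Gs (i - 1) j \<Longrightarrow> kdiff V Gs i j c x = 0"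
  unfolding kdiff_def by (auto split: prod.splits)

lemma kdiff_0: "kdiff V Gs 0 j c x = 0"
  unfolding kdiff_def by (auto split: prod.splits)

lemma kdiff_in_kchains: "kdiff V Gs (i + 1) j c \<in> kchains TYPE('k::field) V Gs i j"
  unfolding kchains_def using kdiff_outside_kbasis[of _ V Gs "i + 1" j c] by simp

(* The coefficient of h c at m \<otimes> e_G is, up to the Koszul sign, the coefficient of c at
   x_v m \<otimes> e_{G - {v}}, where the pivot v = p alpha depends only on the multidegree alpha. *)
definition koszul_homotopy :: "((nat \<Rightarrow> nat) \<Rightarrow> nat) \<Rightarrow> nat set \<Rightarrow> (nat \<Rightarrow> nat) set \<Rightarrow> nat \<Rightarrow> nat
    \<Rightarrow> (((nat \<Rightarrow> nat) \<times> nat set) \<Rightarrow> 'k::field) \<Rightarrow> (((nat \<Rightarrow> nat) \<times> nat set) \<Rightarrow> 'k)" where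
  "koszul_homotopy p V Gs i j c = (\<lambda>(m, G). let v = p (multideg m G) in
     if (m, G) \<in> kbasis V Gs (i + 1) j \<and> v \<in> G
     then (-1) ^ card {g\<in>G. g < v} * c (m(v := Suc (m v)), G - {v}) else 0)"

lemma koszul_homotopy_in_kchains:
  "koszul_homotopy p V Gs i j c \<in> kchains TYPE('k::field) V Gs (i + 1) j"
  unfolding koszul_homotopy_def kchains_def by auto

context
  fixes V :: "nat set" and Gs :: "(nat \<Rightarrow> nat) set" and j :: nat
  assumes finite_V: "finite V"
begin

lemma finite_kbasis: "finite (kbasis V Gs i j)"
proof -
  let ?M = "{m. \<forall>x. (x \<in> V \<longrightarrow> m x \<in> {0..j}) \<and> (x \<notin> V \<longrightarrow> m x = 0)}"
  have "kbasis V Gs i j \<subseteq> ?M \<times> Pow V"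
  proof clarify
    fix m F assume "(m, F) \<in> kbasis V Gs i j"
    hence mF: "mono_supp V m" "F \<subseteq> V" "mono_deg V m + i = j" by (auto simp: kbasis_def)
    have "m x \<le> j" if "x \<in> V" for x
      using member_le_sum[of x V m] that finite_V mF(3) unfolding mono_deg_def by auto
    thus "m \<in> ?M \<and> F \<in> Pow V" using mF unfolding mono_supp_def by auto
  qed
  moreover have "finite (?M \<times> Pow V)"
    using finite_V by (intro finite_cartesian_product finite_set_of_finite_funs) auto
  ultimately show ?thesis by (rule finite_subset)
qed

lemma kbasis_insert_var:
  assumes "(m, G) \<in> kbasis V Gs (i - 1) j" "1 \<le> i" "f \<in> V - G" "1 \<le> m f"
  shows "(m(f := m f - 1), insert f G) \<in> kbasis V Gs i j"
proof -
  have h: "mono_supp V m" "\<not> in_mono_ideal Gs m" "G \<subseteq> V" "card G = i - 1"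
    "mono_deg V m + (i - 1) = j"
    using assms(1) by (auto simp: kbasis_def)
  have "(m(f := m f - 1)) v \<le> m v" for v by simp
  hence "\<not> in_mono_ideal Gs (m(f := m f - 1))" using h(2) in_mono_ideal_mono by blast
  moreover have "mono_supp V (m(f := m f - 1))" using h(1) assms(3) unfolding mono_supp_def by auto
  moreover have "card (insert f G) = i"
    using h(3,4) assms(2,3) finite_subset[OF h(3) finite_V] by auto
  moreover have "mono_deg V (m(f := m f - 1)) + 1 = mono_deg V m"
    using mono_deg_fun_upd[OF finite_V, of f m "m f - 1"] assms(3,4) by auto
  ultimately show ?thesis using h assms(2,3) by (auto simp: kbasis_def)
qed

lemma kbasis_remove_var:
  assumes "(m, F) \<in> kbasis V Gs i j" "1 \<le> i" "v \<in> F" "\<not> in_mono_ideal Gs (m(v := Suc (m v)))"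
  shows "(m(v := Suc (m v)), F - {v}) \<in> kbasis V Gs (i - 1) j"
proof -
  have h: "mono_supp V m" "F \<subseteq> V" "card F = i" "mono_deg V m + i = j"
    using assms(1) by (auto simp: kbasis_def)
  have "mono_supp V (m(v := Suc (m v)))" using h(1,2) assms(3) unfolding mono_supp_def by auto
  moreover have "card (F - {v}) = i - 1" using h(2,3) assms(3) finite_subset[OF h(2) finite_V] by auto
  moreover have "mono_deg V (m(v := Suc (m v))) = mono_deg V m + 1"
    using mono_deg_fun_upd[OF finite_V, of v m "Suc (m v)"] assms(3) h(2) by auto
  ultimately show ?thesis using h assms by (auto simp: kbasis_def)
qed

lemma kdiff_apply:
  fixes c :: "((nat \<Rightarrow> nat) \<times> nat set) \<Rightarrow> 'k::field"
  assumes "1 \<le> i" "(m, G) \<in> kbasis V Gs (i - 1) j" "c \<in> kchains TYPE('k) V Gs i j"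
  shows "kdiff V Gs i j c (m, G) =
    (\<Sum>f\<in>{f\<in>V - G. 1 \<le> m f}. (-1) ^ card {g\<in>G. g < f} * c (m(f := m f - 1), insert f G))"
proof -
  have "kdiff V Gs i j c (m, G) =
    (\<Sum>f\<in>{f\<in>V - G. 1 \<le> m f \<and> (m(f := m f - 1), insert f G) \<in> kbasis V Gs i j}.
       (-1) ^ card {g\<in>G. g < f} * c (m(f := m f - 1), insert f G))"
    unfolding kdiff_def using assms(1,2) by simp
  also have "\<dots> = (\<Sum>f\<in>{f\<in>V - G. 1 \<le> m f}. (-1) ^ card {g\<in>G. g < f} * c (m(f := m f - 1), insert f G))"
    by (rule sum.mono_neutral_left) (use assms(3) finite_V in \<open>auto simp: kchains_def\<close>)
  finally show ?thesis .
qed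

lemma kdiff_kdiff_apply:
  fixes c :: "((nat \<Rightarrow> nat) \<times> nat set) \<Rightarrow> 'k::field"
  assumes i: "1 \<le> i" and mG: "(m, G) \<in> kbasis V Gs (i - 1) j"
    and c: "c \<in> kchains TYPE('k) V Gs (i + 1) j"
  defines "A \<equiv> {f\<in>V - G. 1 \<le> m f}"
  shows "kdiff V Gs i j (kdiff V Gs (i + 1) j c) (m, G) =
    (\<Sum>f\<in>A. \<Sum>f'\<in>A - {f}. (-1) ^ card {g\<in>G. g < f} * ((-1) ^ card {g\<in>insert f G. g < f'} *
       c ((m(f := m f - 1))(f' := (m(f := m f - 1)) f' - 1), insert f' (insert f G))))"
proof -
  have "kdiff V Gs i j (kdiff V Gs (i + 1) j c) (m, G) =
    (\<Sum>f\<in>A. (-1) ^ card {g\<in>G. g < f} * kdiff V Gs (i + 1) j c (m(f := m f - 1), insert f G))"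
    unfolding A_def by (rule kdiff_apply[OF i mG kdiff_in_kchains])
  also have "\<dots> = (\<Sum>f\<in>A. \<Sum>f'\<in>A - {f}. (-1) ^ card {g\<in>G. g < f} *
      ((-1) ^ card {g\<in>insert f G. g < f'} *
       c ((m(f := m f - 1))(f' := (m(f := m f - 1)) f' - 1), insert f' (insert f G))))"
  proof (rule sum.cong)
    fix f assume f: "f \<in> A"
    have "(m(f := m f - 1), insert f G) \<in> kbasis V Gs (i + 1 - 1) j"
      using kbasis_insert_var[OF mG i] f unfolding A_def by simp
    moreover have "{f'\<in>V - insert f G. 1 \<le> (m(f := m f - 1)) f'} = A - {f}"
      unfolding A_def by auto
    ultimately show "(-1) ^ card {g\<in>G. g < f} * kdiff V Gs (i + 1) j c (m(f := m f - 1), insert f G)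
      = (\<Sum>f'\<in>A - {f}. (-1) ^ card {g\<in>G. g < f} * ((-1) ^ card {g\<in>insert f G. g < f'} *
         c ((m(f := m f - 1))(f' := (m(f := m f - 1)) f' - 1), insert f' (insert f G))))"
      using kdiff_apply[of "i + 1" "m(f := m f - 1)" "insert f G" c] c
      by (simp add: sum_distrib_left)
  qed simp
  finally show ?thesis .
qed

lemma kdiff_kdiff:
  fixes c :: "((nat \<Rightarrow> nat) \<times> nat set) \<Rightarrow> 'k::field"
  assumes c: "c \<in> kchains TYPE('k) V Gs (i + 1) j"
  shows "kdiff V Gs i j (kdiff V Gs (i + 1) j c) = 0"
proof
  fix x :: "(nat \<Rightarrow> nat) \<times> nat set"
  obtain m G where x: "x = (m, G)" by (cases x)
  show "kdiff V Gs i j (kdiff V Gs (i + 1) j c) x = 0 x"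
  proof (cases "1 \<le> i \<and> x \<in> kbasis V Gs (i - 1) j")
    case False
    thus ?thesis using kdiff_outside_kbasis[of x V Gs i j] kdiff_0[of V Gs j _ x] by (cases "i = 0") simp_all
  next
    case True
    define A where "A = {f\<in>V - G. 1 \<le> m f}"
    define g where "g f f' = (-1) ^ card {g\<in>G. g < f} * ((-1) ^ card {g\<in>insert f G. g < f'} *
        c ((m(f := m f - 1))(f' := (m(f := m f - 1)) f' - 1), insert f' (insert f G)))" for f f'
    have G: "finite G" using True finite_V by (auto simp: x kbasis_def intro: finite_subset)
    have antisym: "g f f' = - g f' f" if f: "f \<in> A" "f' \<in> A" "f \<noteq> f'" for f f'
    proof -
      have fG: "f \<notin> G" "f' \<notin> G" using f unfolding A_def by auto
      define X where "X = c ((m(f := m f - 1))(f' := (m(f := m f - 1)) f' - 1), insert f' (insert f G))"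
      have "(m(f' := m f' - 1))(f := (m(f' := m f' - 1)) f - 1)
          = (m(f := m f - 1))(f' := (m(f := m f - 1)) f' - 1)"
        using f(3) by (auto simp: fun_eq_iff)
      moreover have "insert f (insert f' G) = insert f' (insert f G)" by auto
      ultimately have X': "c ((m(f' := m f' - 1))(f := (m(f' := m f' - 1)) f - 1), insert f (insert f' G)) = X"
        unfolding X_def by simp
      have gff': "g f f' = (-1) ^ card {g\<in>G. g < f} * (-1) ^ card {g\<in>G. g < f'} * (-1) ^ (if f < f' then 1 else 0) * X"
        unfolding g_def X_def card_less_insert[OF G fG(1)] power_add by (simp only: mult.assoc)
      have gf'f: "g f' f = (-1) ^ card {g\<in>G. g < f} * (-1) ^ card {g\<in>G. g < f'} * (-1) ^ (if f' < f then 1 else 0) * X"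
        unfolding g_def X' card_less_insert[OF G fG(2)] power_add by (simp only: mult_ac)
      have "(-1::'k) ^ (if f < f' then 1 else 0) = - ((-1) ^ (if f' < f then 1 else 0))"
        using f(3) by (cases "f < f'") auto
      thus ?thesis unfolding gff' gf'f by simp
    qed
    have "(\<Sum>f\<in>A. \<Sum>f'\<in>A - {f}. g f f') = 0"
      by (rule sum_distinct_pairs_antisym[OF _ antisym]) (simp_all add: A_def finite_V)
    moreover have "kdiff V Gs i j (kdiff V Gs (i + 1) j c) x = (\<Sum>f\<in>A. \<Sum>f'\<in>A - {f}. g f f')"
      unfolding x A_def g_def using True c by (intro kdiff_kdiff_apply) (simp_all add: x)
    ultimately show ?thesis by simp
  qed
qed

lemma koszul_homotopy_apply_insert_var:
  assumes mF: "(m, F) \<in> kbasis V Gs i j" and f: "f \<in> V - F" "1 \<le> m f"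
    and v: "p (multideg m F) = v"
  shows "koszul_homotopy p V Gs i j c (m(f := m f - 1), insert f F) =
    (if v \<in> insert f F then (-1) ^ card {g\<in>insert f F. g < v} *
       c ((m(f := m f - 1))(v := Suc ((m(f := m f - 1)) v)), insert f F - {v}) else 0)"
proof -
  have "(m(f := m f - 1), insert f F) \<in> kbasis V Gs (i + 1) j"
    using kbasis_insert_var[of m F "i + 1"] mF f by simp
  thus ?thesis using multideg_insert_var[of f F m] f v
    unfolding koszul_homotopy_def by (simp add: Let_def)
qed

lemma kdiff_koszul_homotopy_monomial_pivot:
  fixes c :: "((nat \<Rightarrow> nat) \<times> nat set) \<Rightarrow> 'k::field"
  assumes mF: "(m, F) \<in> kbasis V Gs i j" and v: "p (multideg m F) = v" "v \<notin> F" "1 \<le> m v"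
  shows "kdiff V Gs (i + 1) j (koszul_homotopy p V Gs i j c) (m, F) = c (m, F)"
proof -
  define A where "A = {f\<in>V - F. 1 \<le> m f}"
  let ?h = "koszul_homotopy p V Gs i j c"
  have "v \<in> V" using mF v(3) by (auto simp: kbasis_def mono_supp_def)
  hence vA: "v \<in> A" unfolding A_def using v by simp
  have finA: "finite A" unfolding A_def using finite_V by simp
  have "kdiff V Gs (i + 1) j ?h (m, F) =
      (\<Sum>f\<in>A. (-1) ^ card {g\<in>F. g < f} * ?h (m(f := m f - 1), insert f F))"
    unfolding A_def by (rule kdiff_apply[OF _ _ koszul_homotopy_in_kchains]) (simp_all add: mF)
  also have "\<dots> = (-1) ^ card {g\<in>F. g < v} * ?h (m(v := m v - 1), insert v F)
      + (\<Sum>f\<in>A - {v}. (-1) ^ card {g\<in>F. g < f} * ?h (m(f := m f - 1), insert f F))"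
    by (rule sum.remove[OF finA vA])
  also have "(\<Sum>f\<in>A - {v}. (-1) ^ card {g\<in>F. g < f} * ?h (m(f := m f - 1), insert f F)) = 0"
  proof (rule sum.neutral, rule ballI)
    fix f assume "f \<in> A - {v}"
    hence f: "f \<in> V - F" "1 \<le> m f" and "v \<notin> insert f F" using v(2) unfolding A_def by auto
    thus "(-1) ^ card {g\<in>F. g < f} * ?h (m(f := m f - 1), insert f F) = 0"
      using koszul_homotopy_apply_insert_var[where p = p, OF mF f v(1)] by simp
  qed
  also have "?h (m(v := m v - 1), insert v F) = (-1) ^ card {g\<in>F. g < v} * c (m, F)"
  proof -
    have "(m(v := m v - 1))(v := Suc ((m(v := m v - 1)) v)) = m" using v(3) by auto
    moreover have "insert v F - {v} = F" "{g\<in>insert v F. g < v} = {g\<in>F. g < v}" using v(2) by auto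
    ultimately show ?thesis
      using koszul_homotopy_apply_insert_var[where p = p, OF mF _ v(3) v(1)] \<open>v \<in> V\<close> v(2) by simp
  qed
  also have "(-1::'k) ^ card {g\<in>F. g < v} * ((-1) ^ card {g\<in>F. g < v} * c (m, F)) + 0 = c (m, F)"
    by (simp add: mult.assoc[symmetric] flip: power_mult_distrib)
  finally show ?thesis .
qed

lemma kdiff_apply_remove_var:
  fixes c :: "((nat \<Rightarrow> nat) \<times> nat set) \<Rightarrow> 'k::field"
  assumes i: "1 \<le> i" and c: "c \<in> kchains TYPE('k) V Gs i j"
    and mF: "(m, F) \<in> kbasis V Gs i j" and v: "v \<in> F"
    and raise: "\<not> in_mono_ideal Gs (m(v := Suc (m v)))"
  shows "kdiff V Gs i j c (m(v := Suc (m v)), F - {v}) = (-1) ^ card {g\<in>F. g < v} * c (m, F)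
    + (\<Sum>f\<in>{f\<in>V - F. 1 \<le> m f}. (-1) ^ card {g\<in>F - {v}. g < f}
        * c ((m(v := Suc (m v)))(f := (m(v := Suc (m v))) f - 1), insert f (F - {v})))"
proof -
  define A where "A = {f\<in>V - F. 1 \<le> m f}"
  define T where "T f = (-1::'k) ^ card {g\<in>F - {v}. g < f}
    * c ((m(v := Suc (m v)))(f := (m(v := Suc (m v))) f - 1), insert f (F - {v}))" for f
  have "F \<subseteq> V" using mF by (simp add: kbasis_def)
  hence "{f\<in>V - (F - {v}). 1 \<le> (m(v := Suc (m v))) f} = insert v A"
    unfolding A_def using v by auto
  hence "kdiff V Gs i j c (m(v := Suc (m v)), F - {v}) = (\<Sum>f\<in>insert v A. T f)"
    unfolding T_def using kdiff_apply[OF i kbasis_remove_var[OF mF i v raise] c] by simp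
  also have "\<dots> = T v + (\<Sum>f\<in>A. T f)"
    using v finite_V unfolding A_def by simp
  also have "T v = (-1) ^ card {g\<in>F. g < v} * c (m, F)"
    unfolding T_def card_less_remove_self using v by (simp add: insert_absorb)
  finally show ?thesis unfolding A_def T_def .
qed

lemma kdiff_koszul_homotopy_exterior_pivot:
  fixes c :: "((nat \<Rightarrow> nat) \<times> nat set) \<Rightarrow> 'k::field"
  assumes i: "1 \<le> i" and c: "c \<in> kchains TYPE('k) V Gs i j" "kdiff V Gs i j c = 0"
    and mF: "(m, F) \<in> kbasis V Gs i j" and v: "p (multideg m F) = v" "v \<in> F"
    and raise: "\<not> in_mono_ideal Gs (m(v := Suc (m v)))"
  shows "kdiff V Gs (i + 1) j (koszul_homotopy p V Gs i j c) (m, F) = c (m, F)"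
proof -
  define A where "A = {f\<in>V - F. 1 \<le> m f}"
  define s where "s f = (-1::'k) ^ card {g\<in>F - {v}. g < f}" for f
  define X where "X f = ((m(v := Suc (m v)))(f := (m(v := Suc (m v))) f - 1), insert f (F - {v}))" for f
  let ?h = "koszul_homotopy p V Gs i j c"
  have F: "finite F" using mF finite_V by (auto simp: kbasis_def intro: finite_subset)
  have cycle: "(\<Sum>f\<in>A. s f * c (X f)) = - ((-1) ^ card {g\<in>F. g < v} * c (m, F))"
    using kdiff_apply_remove_var[OF i c(1) mF v(2) raise] c(2)
    unfolding A_def s_def X_def by (simp add: eq_neg_iff_add_eq_0 add.commute)
  have summand: "(-1) ^ card {g\<in>F. g < f} * ?h (m(f := m f - 1), insert f F)
      = - ((-1) ^ card {g\<in>F. g < v} * (s f * c (X f)))" if f: "f \<in> A" for f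
  proof -
    have f': "f \<in> V - F" "1 \<le> m f" and "f \<noteq> v" using f v(2) unfolding A_def by auto
    have eX: "((m(f := m f - 1))(v := Suc ((m(f := m f - 1)) v)), insert f F - {v}) = X f"
      unfolding X_def using \<open>f \<noteq> v\<close> by (auto simp: fun_eq_iff)
    have "?h (m(f := m f - 1), insert f F) = (-1) ^ card {g\<in>insert f F. g < v} * c (X f)"
      using koszul_homotopy_apply_insert_var[where p = p, OF mF f' v(1), unfolded eX] v(2) by simp
    thus ?thesis
      using minus_one_power_card_less_swap[OF F v(2), of f, where 'k = 'k] f'
      unfolding s_def by (simp add: mult.assoc[symmetric])
  qed
  have "kdiff V Gs (i + 1) j ?h (m, F) =
      (\<Sum>f\<in>A. (-1) ^ card {g\<in>F. g < f} * ?h (m(f := m f - 1), insert f F))"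
    unfolding A_def by (rule kdiff_apply[OF _ _ koszul_homotopy_in_kchains]) (simp_all add: mF)
  also have "\<dots> = (\<Sum>f\<in>A. - ((-1) ^ card {g\<in>F. g < v} * (s f * c (X f))))"
    by (rule sum.cong[OF refl summand])
  also have "\<dots> = c (m, F)"
    by (simp add: sum_negf flip: sum_distrib_left)
      (simp add: cycle mult.assoc[symmetric] flip: power_mult_distrib)
  finally show ?thesis .
qed

lemma kdiff_koszul_homotopy:
  fixes c :: "((nat \<Rightarrow> nat) \<times> nat set) \<Rightarrow> 'k::field"
  assumes "1 \<le> i" "c \<in> kchains TYPE('k) V Gs i j" "kdiff V Gs i j c = 0"
    and "(m, F) \<in> kbasis V Gs i j" "p (multideg m F) = v" "1 \<le> multideg m F v"
    and "v \<in> F \<Longrightarrow> \<not> in_mono_ideal Gs (m(v := Suc (m v)))"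
  shows "kdiff V Gs (i + 1) j (koszul_homotopy p V Gs i j c) (m, F) = c (m, F)"
proof (cases "v \<in> F")
  case True
  with assms show ?thesis by (intro kdiff_koszul_homotopy_exterior_pivot) auto
next
  case False
  with assms show ?thesis by (intro kdiff_koszul_homotopy_monomial_pivot) (auto simp: multideg_def)
qed

end

lemma kdiff_add: "kdiff V Gs i j (c + c') = kdiff V Gs i j c + kdiff V Gs i j c'"
  unfolding kdiff_def by (auto simp: fun_eq_iff sum.distrib distrib_left)

lemma kdiff_kscale: "kdiff V Gs i j (kscale a c) = kscale a (kdiff V Gs i j c)"
  unfolding kdiff_def kscale_def by (auto simp: fun_eq_iff sum_distrib_left mult_ac)

definition kcycles :: "nat set \<Rightarrow> (nat \<Rightarrow> nat) set \<Rightarrow> nat \<Rightarrow> nat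
    \<Rightarrow> (((nat \<Rightarrow> nat) \<times> nat set) \<Rightarrow> 'k::field) set" where
  "kcycles V Gs i j = {c \<in> kchains TYPE('k) V Gs i j. kdiff V Gs i j c = 0}"

definition kboundaries :: "nat set \<Rightarrow> (nat \<Rightarrow> nat) set \<Rightarrow> nat \<Rightarrow> nat
    \<Rightarrow> (((nat \<Rightarrow> nat) \<times> nat set) \<Rightarrow> 'k::field) set" where
  "kboundaries V Gs i j = kdiff V Gs (i + 1) j ` kchains TYPE('k) V Gs (i + 1) j"

lemma betti_eq_dim_kcycles_minus_dim_kboundaries:
  "betti TYPE('k::field) V Gs i j
     = kscale.dim (kcycles V Gs i j :: (_ \<Rightarrow> 'k) set) - kscale.dim (kboundaries V Gs i j :: (_ \<Rightarrow> 'k) set)"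
  unfolding betti_def kcycles_def kboundaries_def zero_fun_def ..

lemma kboundaries_subset_kcycles: "finite V \<Longrightarrow> kboundaries V Gs i j \<subseteq> kcycles V Gs i j"
  unfolding kboundaries_def kcycles_def using kdiff_in_kchains kdiff_kdiff by blast

lemma kscale_subspace_kboundaries: "kscale.subspace (kboundaries V Gs i j :: (_ \<Rightarrow> 'k::field) set)"
proof (rule kscale.subspaceI)
  show "0 \<in> kboundaries V Gs i j"
    unfolding kboundaries_def
    by (rule image_eqI[of _ _ 0]) (auto simp: kdiff_def kchains_def fun_eq_iff)
next
  fix x y :: "_ \<Rightarrow> 'k" assume "x \<in> kboundaries V Gs i j" "y \<in> kboundaries V Gs i j"
  then obtain w w' where "x = kdiff V Gs (i + 1) j w" "y = kdiff V Gs (i + 1) j w'"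
    "w \<in> kchains TYPE('k) V Gs (i + 1) j" "w' \<in> kchains TYPE('k) V Gs (i + 1) j"
    unfolding kboundaries_def by blast
  thus "x + y \<in> kboundaries V Gs i j"
    unfolding kboundaries_def by (intro image_eqI[of _ _ "w + w'"]) (auto simp: kdiff_add kchains_def)
next
  fix a and x :: "_ \<Rightarrow> 'k" assume "x \<in> kboundaries V Gs i j"
  then obtain w where "x = kdiff V Gs (i + 1) j w" "w \<in> kchains TYPE('k) V Gs (i + 1) j"
    unfolding kboundaries_def by blast
  thus "kscale a x \<in> kboundaries V Gs i j"
    unfolding kboundaries_def
    by (intro image_eqI[of _ _ "kscale a w"]) (simp add: kdiff_kscale, simp add: kchains_def kscale_def)
qed

lemma betti_eq_card_complement:
  fixes E :: "((nat \<Rightarrow> nat) \<times> nat set) set"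
  assumes V: "finite V" and E: "E \<subseteq> kbasis V Gs i j"
    and cycles: "\<And>c :: _ \<Rightarrow> 'k::field. (\<And>b. b \<notin> E \<Longrightarrow> c b = 0) \<Longrightarrow> kdiff V Gs i j c = 0"
    and decompose: "\<And>z. z \<in> kcycles V Gs i j \<Longrightarrow>
      \<exists>w \<in> kchains TYPE('k) V Gs (i + 1) j. \<forall>b. b \<notin> E \<longrightarrow> z b = kdiff V Gs (i + 1) j w b"
    and no_boundaries: "\<And>w. w \<in> kchains TYPE('k) V Gs (i + 1) j \<Longrightarrow>
      (\<And>b. b \<notin> E \<Longrightarrow> kdiff V Gs (i + 1) j w b = 0) \<Longrightarrow> kdiff V Gs (i + 1) j w = 0"
  shows "betti TYPE('k) V Gs i j = card E"
proof -
  let ?Z = "kcycles V Gs i j :: (_ \<Rightarrow> 'k) set" and ?B = "kboundaries V Gs i j :: (_ \<Rightarrow> 'k) set"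
  let ?D = "(\<lambda>x. indicator {x}) ` E :: (_ \<Rightarrow> 'k) set"
  have finite_E: "finite E" using finite_subset[OF E finite_kbasis[OF V]] .
  have span_D: "kscale.span ?D = {c. \<forall>b. b \<notin> E \<longrightarrow> c b = 0}"
    by (rule kscale_span_indicators[OF finite_E])
  have Z: "?Z = {x + y | x y. x \<in> ?B \<and> y \<in> kscale.span ?D}"
  proof (intro equalityI subsetI)
    fix z assume z: "z \<in> ?Z"
    then obtain w where w: "w \<in> kchains TYPE('k) V Gs (i + 1) j"
      "\<forall>b. b \<notin> E \<longrightarrow> z b = kdiff V Gs (i + 1) j w b"
      using decompose by blast
    have "kdiff V Gs (i + 1) j w \<in> ?B" unfolding kboundaries_def using w(1) by blast
    moreover have "z - kdiff V Gs (i + 1) j w \<in> kscale.span ?D" using w(2) span_D by simp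
    ultimately show "z \<in> {x + y | x y. x \<in> ?B \<and> y \<in> kscale.span ?D}" by force
  next
    fix z assume "z \<in> {x + y | x y. x \<in> ?B \<and> y \<in> kscale.span ?D}"
    then obtain x y where xy: "z = x + y" "x \<in> ?Z" "y \<in> kscale.span ?D"
      using kboundaries_subset_kcycles[OF V] by blast
    have "kdiff V Gs i j y = 0" using xy(3) span_D by (intro cycles) auto
    moreover have "y \<in> kchains TYPE('k) V Gs i j" using xy(3) span_D E unfolding kchains_def by blast
    ultimately show "z \<in> ?Z" using xy(1,2) by (auto simp: kcycles_def kchains_def kdiff_add)
  qed
  have disj: "?B \<inter> kscale.span ?D \<subseteq> {0}"
    using no_boundaries span_D unfolding kboundaries_def by auto
  have B: "?B \<subseteq> kscale.span ((\<lambda>x. indicator {x}) ` kbasis V Gs i j)"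
    using kboundaries_subset_kcycles[OF V, of Gs i j]
    unfolding kscale_span_indicators[OF finite_kbasis[OF V]] kcycles_def kchains_def by blast
  have "kscale.dim ?Z = kscale.dim ?B + card ?D"
    unfolding Z using finite_E finite_kbasis[OF V]
    by (intro kscale.dim_sum_span_independent[OF kscale_subspace_kboundaries B _
          kscale_independent_indicators _ disj]) simp_all
  thus ?thesis by (simp add: betti_eq_dim_kcycles_minus_dim_kboundaries card_indicators)
qed

section \<open>The star graph\<close>

abbreviation star_ideal :: "nat \<Rightarrow> (nat \<Rightarrow> nat) set" where
  "star_ideal n \<equiv> path3_gens {0..n} (star_edge n)"

abbreviation star_basis :: "nat \<Rightarrow> nat \<Rightarrow> ((nat \<Rightarrow> nat) \<times> nat set) set" where
  "star_basis n i \<equiv> kbasis {0..n} (star_ideal n) i (n + 1)"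

definition star_path_dvd :: "nat \<Rightarrow> (nat \<Rightarrow> nat) \<Rightarrow> bool" where
  "star_path_dvd n m \<longleftrightarrow> 0 < m 0 \<and> (\<exists>a\<in>{1..n}. \<exists>b\<in>{1..n}. a \<noteq> b \<and> 0 < m a \<and> 0 < m b)"

lemma in_star_ideal_iff: "in_mono_ideal (star_ideal n) m \<longleftrightarrow> star_path_dvd n m"
proof
  assume "in_mono_ideal (star_ideal n) m"
  then obtain x y z where g: "x \<in> {0..n}" "z \<in> {0..n}" "x \<noteq> y" "y \<noteq> z" "x \<noteq> z"
    "star_edge n x y" "star_edge n y z" and le: "\<forall>v. sqfree_mono {x, y, z} v \<le> m v"
    unfolding in_mono_ideal_def path3_gens_def by blast
  have "y = 0" "x \<in> {1..n}" "z \<in> {1..n}" using g unfolding star_edge_def by auto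
  moreover have "0 < m x" "0 < m y" "0 < m z"
    using le[rule_format, of x] le[rule_format, of y] le[rule_format, of z]
    unfolding sqfree_mono_def by auto
  ultimately show "star_path_dvd n m" unfolding star_path_dvd_def using g by blast
next
  assume "star_path_dvd n m"
  then obtain a b where ab: "a \<in> {1..n}" "b \<in> {1..n}" "a \<noteq> b" "0 < m a" "0 < m b" "0 < m 0"
    unfolding star_path_dvd_def by blast
  have "sqfree_mono {a, 0, b} \<in> star_ideal n"
    unfolding path3_gens_def star_edge_def using ab by force
  moreover have "\<forall>v. sqfree_mono {a, 0, b} v \<le> m v" using ab unfolding sqfree_mono_def by auto
  ultimately show "in_mono_ideal (star_ideal n) m" unfolding in_mono_ideal_def by blast
qed

lemma mem_star_basis_iff:
  "(m, F) \<in> kbasis {0..n} (star_ideal n) i j \<longleftrightarrow> mono_supp {0..n} m \<and> \<not> star_path_dvd n m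
     \<and> F \<subseteq> {0..n} \<and> card F = i \<and> mono_deg {0..n} m + i = j"
  unfolding kbasis_def by (simp add: in_star_ideal_iff)

lemma star_path_dvd_mono:
  "star_path_dvd n m \<Longrightarrow> (\<And>v. 0 < m v \<Longrightarrow> 0 < m' v) \<Longrightarrow> star_path_dvd n m'"
  unfolding star_path_dvd_def by blast

lemma star_multideg_eq_one_if_le_one:
  assumes mF: "(m, F) \<in> star_basis n i" and le1: "\<And>w. multideg m F w \<le> 1" and w: "w \<in> {0..n}"
  shows "multideg m F w = 1"
proof (rule ccontr)
  assume "multideg m F w \<noteq> 1"
  hence "multideg m F w = 0" using le1[of w] by simp
  have "(\<Sum>u\<in>{0..n}. multideg m F u) = multideg m F w + (\<Sum>u\<in>{0..n} - {w}. multideg m F u)"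
    using w by (simp add: sum.remove)
  also have "\<dots> \<le> 0 + (\<Sum>u\<in>{0..n} - {w}. 1)"
    using \<open>multideg m F w = 0\<close> le1 by (intro add_mono sum_mono) auto
  also have "\<dots> = n" using w by simp
  finally show False using sum_multideg[OF _ mF] by simp
qed

(* Membership in the star ideal depends only on the support, so the homotopy can fail only
   where x_v does not divide m.  Choosing v with alpha_v >= 2 whenever possible leaves only the
   squarefree multidegree, and there the leaf x_1 confines the failures to the elements
   x_0 x_k \<otimes> e_{V - {0, k}}, 2 <= k <= n. *)
definition star_pivot :: "(nat \<Rightarrow> nat) \<Rightarrow> nat" where
  "star_pivot \<alpha> = (if \<exists>w. 2 \<le> \<alpha> w then LEAST w. 2 \<le> \<alpha> w else 1)"

lemma star_pivot_le_multideg: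
  assumes mF: "(m, F) \<in> star_basis n i" and n: "1 \<le> n"
  shows "1 \<le> multideg m F (star_pivot (multideg m F))"
proof (cases "\<exists>w. 2 \<le> multideg m F w")
  case True
  thus ?thesis unfolding star_pivot_def using LeastI_ex[OF True] by simp
next
  case False
  hence "star_pivot (multideg m F) = 1" unfolding star_pivot_def by simp
  moreover have "multideg m F w \<le> 1" for w using False[unfolded not_ex, rule_format, of w] by simp
  ultimately show ?thesis using star_multideg_eq_one_if_le_one[OF mF] n by simp
qed

definition pair_elem :: "nat \<Rightarrow> nat \<Rightarrow> nat \<Rightarrow> (nat \<Rightarrow> nat) \<times> nat set" where
  "pair_elem n a b = (sqfree_mono {a, b}, {0..n} - {a, b})"

definition star_exceptional :: "nat \<Rightarrow> ((nat \<Rightarrow> nat) \<times> nat set) set" where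
  "star_exceptional n = pair_elem n 0 ` {2..n}"

lemma star_multideg_le_one_if_pivot_raise_in_ideal:
  assumes mF: "(m, F) \<in> star_basis n i" and v: "star_pivot (multideg m F) = v" "v \<in> F"
    and path: "star_path_dvd n (m(v := Suc (m v)))"
  shows "multideg m F w \<le> 1"
proof (rule ccontr)
  assume "\<not> multideg m F w \<le> 1"
  hence "2 \<le> multideg m F w" by simp
  hence ex: "\<exists>w. 2 \<le> multideg m F w" by blast
  hence "2 \<le> multideg m F v" unfolding v(1)[symmetric] star_pivot_def using LeastI_ex[OF ex] by simp
  hence "0 < m v" using v(2) unfolding multideg_def by simp
  have "star_path_dvd n m"
    using path by (rule star_path_dvd_mono) (use \<open>0 < m v\<close> in \<open>auto split: if_splits\<close>)
  thus False using mF by (simp add: mem_star_basis_iff)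
qed

lemma star_squarefree_eq_pair_elem:
  assumes mF: "(m, F) \<in> star_basis n i" and one: "\<And>w. w \<in> {0..n} \<Longrightarrow> multideg m F w = 1"
    and k: "k \<in> {1..n}" "0 < m 0" "0 < m k"
  shows "(m, F) = pair_elem n 0 k"
proof -
  have h: "mono_supp {0..n} m" "\<not> star_path_dvd n m" "F \<subseteq> {0..n}"
    using mF by (auto simp: mem_star_basis_iff)
  have m0: "m 0 = 1" "0 \<notin> F" using one[of 0] k(2) unfolding multideg_def by (auto split: if_splits)
  have mk: "m k = 1" "k \<notin> F" using one[of k] k unfolding multideg_def by (auto split: if_splits)
  have mw: "m w = 0" if "w \<noteq> 0" "w \<noteq> k" for w
  proof (rule ccontr)
    assume "m w \<noteq> 0"
    moreover have "w \<in> {0..n}" using h(1) \<open>m w \<noteq> 0\<close> unfolding mono_supp_def by auto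
    ultimately have "star_path_dvd n m" unfolding star_path_dvd_def using that k m0 mk
      by (intro conjI bexI[of _ w] bexI[of _ k]) auto
    thus False using h(2) by simp
  qed
  have "m = sqfree_mono {0, k}" unfolding sqfree_mono_def using m0 mk mw by (auto simp: fun_eq_iff)
  moreover have "F = {0..n} - {0, k}"
  proof
    show "F \<subseteq> {0..n} - {0, k}" using h(3) m0 mk by auto
    show "{0..n} - {0, k} \<subseteq> F"
    proof
      fix w assume "w \<in> {0..n} - {0, k}"
      hence "multideg m F w = 1" "m w = 0" using one mw by auto
      thus "w \<in> F" unfolding multideg_def by (auto split: if_splits)
    qed
  qed
  ultimately show ?thesis unfolding pair_elem_def by simp
qed

lemma star_exceptional_if_pivot_raise_in_ideal:
  assumes mF: "(m, F) \<in> star_basis n i"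
    and v: "star_pivot (multideg m F) = v" "v \<in> F"
    and path: "star_path_dvd n (m(v := Suc (m v)))"
  shows "(m, F) \<in> star_exceptional n"
proof -
  have le1: "multideg m F w \<le> 1" for w by (rule star_multideg_le_one_if_pivot_raise_in_ideal[OF mF v path])
  have one: "multideg m F w = 1" if "w \<in> {0..n}" for w
    using star_multideg_eq_one_if_le_one[OF mF le1 that] .
  have "\<not> 2 \<le> multideg m F w" for w using le1[of w] by simp
  hence "v = 1" using v(1) unfolding star_pivot_def by auto
  from path \<open>v = 1\<close> obtain a b where ab: "a \<in> {1..n}" "b \<in> {1..n}" "a \<noteq> b"
    "0 < (m(1 := Suc (m 1))) a" "0 < (m(1 := Suc (m 1))) b" "0 < m 0"
    unfolding star_path_dvd_def by auto
  have "\<exists>k\<in>{2..n}. 0 < m k"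
  proof (cases "a = 1")
    case True
    hence "b \<noteq> 1" using ab(3) by simp
    thus ?thesis using ab(2,5) by (intro bexI[of _ b]) auto
  next
    case False
    thus ?thesis using ab(1,4) by (intro bexI[of _ a]) auto
  qed
  then obtain k where k: "k \<in> {2..n}" "0 < m k" by blast
  hence "(m, F) = pair_elem n 0 k" using star_squarefree_eq_pair_elem[OF mF one] ab(6) by simp
  thus ?thesis unfolding star_exceptional_def using k(1) by blast
qed

lemma pair_elem_in_star_basis:
  assumes "a \<noteq> b" "a \<le> n" "b \<le> n"
  shows "pair_elem n a b \<in> star_basis n (n - 1)"
proof -
  have "\<not> star_path_dvd n (sqfree_mono {a, b})" unfolding star_path_dvd_def sqfree_mono_def by auto
  moreover have "mono_supp {0..n} (sqfree_mono {a, b})"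
    unfolding mono_supp_def sqfree_mono_def using assms by auto
  moreover have "mono_deg {0..n} (sqfree_mono {a, b}) = 2"
  proof -
    have "mono_deg {0..n} (sqfree_mono {a, b}) = (\<Sum>v\<in>{0..n}. if v \<in> {a, b} then 1 else 0)"
      unfolding mono_deg_def sqfree_mono_def ..
    also have "\<dots> = (\<Sum>v\<in>{0..n} \<inter> {a, b}. 1)"
      by (rule sum.inter_restrict[symmetric]) simp
    also have "{0..n} \<inter> {a, b} = {a, b}" using assms by auto
    finally show ?thesis using assms by simp
  qed
  moreover have "card ({0..n} - {a, b}) = n - 1" using assms by (simp add: card_Diff_subset)
  ultimately show ?thesis unfolding pair_elem_def mem_star_basis_iff using assms by auto
qed

lemma star_exceptional_Int_star_basis:
  "star_exceptional n \<inter> star_basis n i = (if i = n - 1 then star_exceptional n else {})"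
proof -
  have "star_exceptional n \<subseteq> star_basis n (n - 1)"
    unfolding star_exceptional_def using pair_elem_in_star_basis by auto
  moreover have "star_basis n (n - 1) \<inter> star_basis n i = {}" if "i \<noteq> n - 1"
    using that by (auto simp: kbasis_def)
  ultimately show ?thesis by auto
qed

lemma card_star_exceptional: "card (star_exceptional n) = n - 1"
proof -
  have "inj_on (pair_elem n 0) {2..n}"
  proof (rule inj_onI)
    fix k k' assume "k \<in> {2..n}" "k' \<in> {2..n}" "pair_elem n 0 k = pair_elem n 0 k'"
    hence "sqfree_mono {0, k} k = sqfree_mono {0, k'} k" "k \<noteq> 0" unfolding pair_elem_def by auto
    thus "k = k'" unfolding sqfree_mono_def by (auto split: if_splits)
  qed
  thus ?thesis unfolding star_exceptional_def by (simp add: card_image)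
qed

lemma pair_elem_notin_star_exceptional:
  assumes "1 \<in> {a, b}"
  shows "pair_elem n a b \<notin> star_exceptional n"
proof
  assume "pair_elem n a b \<in> star_exceptional n"
  then obtain k where "k \<in> {2..n}" "pair_elem n a b = pair_elem n 0 k"
    unfolding star_exceptional_def by blast
  hence "sqfree_mono {a, b} 1 = sqfree_mono {0, k} 1" by (simp add: pair_elem_def)
  thus False using assms \<open>k \<in> {2..n}\<close> by (auto simp: sqfree_mono_def)
qed

lemma insert_var_notin_star_exceptional:
  assumes mG: "(m, G) \<in> star_basis n i" and f: "f \<in> {0..n} - G" "1 \<le> m f"
  shows "(m(f := m f - 1), insert f G) \<notin> star_exceptional n"
proof
  assume "(m(f := m f - 1), insert f G) \<in> star_exceptional n"
  then obtain k where "k \<in> {2..n}" "(m(f := m f - 1), insert f G) = pair_elem n 0 k"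
    unfolding star_exceptional_def by blast
  hence k: "k \<in> {2..n}" "m(f := m f - 1) = sqfree_mono {0, k}" "insert f G = {0..n} - {0, k}"
    by (simp_all add: pair_elem_def)
  have "f \<in> {0..n} - {0, k}" using k(3) by blast
  hence fk: "f \<noteq> 0" "f \<noteq> k" by simp_all
  have "m 0 = 1" "m k = 1"
    using fun_cong[OF k(2), of 0] fun_cong[OF k(2), of k] fk unfolding sqfree_mono_def by auto
  hence "star_path_dvd n m" unfolding star_path_dvd_def using k(1) fk f
    by (intro conjI bexI[of _ k] bexI[of _ f]) auto
  thus False using mG by (simp add: mem_star_basis_iff)
qed

lemma kdiff_supported_star_exceptional:
  fixes c :: "((nat \<Rightarrow> nat) \<times> nat set) \<Rightarrow> 'k::field"
  assumes c: "\<And>b. b \<notin> star_exceptional n \<inter> star_basis n i \<Longrightarrow> c b = 0"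
  shows "kdiff {0..n} (star_ideal n) i (n + 1) c = 0"
proof
  fix x :: "(nat \<Rightarrow> nat) \<times> nat set"
  obtain m G where x: "x = (m, G)" by (cases x)
  show "kdiff {0..n} (star_ideal n) i (n + 1) c x = 0 x"
  proof (cases "1 \<le> i \<and> x \<in> star_basis n (i - 1)")
    case False
    thus ?thesis using kdiff_outside_kbasis[of x] kdiff_0[of _ _ _ _ x] by (cases "i = 0") simp_all
  next
    case True
    hence mG: "(m, G) \<in> star_basis n (i - 1)" by (simp add: x)
    have "c \<in> kchains TYPE('k) {0..n} (star_ideal n) i (n + 1)" using c unfolding kchains_def by blast
    hence "kdiff {0..n} (star_ideal n) i (n + 1) c (m, G) =
      (\<Sum>f\<in>{f\<in>{0..n} - G. 1 \<le> m f}. (-1) ^ card {g\<in>G. g < f} * c (m(f := m f - 1), insert f G))"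
      using True mG by (intro kdiff_apply) simp_all
    also have "\<dots> = 0"
    proof (rule sum.neutral, rule ballI)
      fix f assume "f \<in> {f\<in>{0..n} - G. 1 \<le> m f}"
      hence "c (m(f := m f - 1), insert f G) = 0"
        using insert_var_notin_star_exceptional[OF mG] c by blast
      thus "(-1) ^ card {g\<in>G. g < f} * c (m(f := m f - 1), insert f G) = 0" by simp
    qed
    finally show ?thesis unfolding x by simp
  qed
qed

lemma kdiff_pair_elem:
  fixes w :: "((nat \<Rightarrow> nat) \<times> nat set) \<Rightarrow> 'k::field"
  assumes w: "w \<in> kchains TYPE('k) {0..n} (star_ideal n) n (n + 1)" and ab: "a < b" "b \<le> n"
  shows "kdiff {0..n} (star_ideal n) n (n + 1) w (pair_elem n a b) =
     (-1) ^ a * w (sqfree_mono {b}, {0..n} - {b}) + (-1) ^ (b - 1) * w (sqfree_mono {a}, {0..n} - {a})"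
proof -
  let ?G = "{0..n} - {a, b}"
  define T where "T f = (-1) ^ card {g\<in>?G. g < f}
    * w ((sqfree_mono {a, b})(f := sqfree_mono {a, b} f - 1), insert f ?G)" for f
  have "kdiff {0..n} (star_ideal n) n (n + 1) w (pair_elem n a b) =
      (\<Sum>f\<in>{f\<in>{0..n} - ?G. 1 \<le> sqfree_mono {a, b} f}. T f)"
    unfolding pair_elem_def T_def
    using pair_elem_in_star_basis[of a b n] ab w by (intro kdiff_apply) (simp_all add: pair_elem_def)
  also have "{f\<in>{0..n} - ?G. 1 \<le> sqfree_mono {a, b} f} = {a, b}"
    using ab by (auto simp: sqfree_mono_def)
  also have "(\<Sum>f\<in>{a, b}. T f) = T a + T b" using ab by simp
  also have "T a = (-1) ^ a * w (sqfree_mono {b}, {0..n} - {b})"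
  proof -
    have "(sqfree_mono {a, b})(a := sqfree_mono {a, b} a - 1) = sqfree_mono {b}"
      using ab by (auto simp: sqfree_mono_def fun_eq_iff)
    moreover have "insert a ?G = {0..n} - {b}" using ab by auto
    moreover have "{g\<in>?G. g < a} = {0..<a}" using ab by auto
    ultimately show ?thesis unfolding T_def by simp
  qed
  also have "T b = (-1) ^ (b - 1) * w (sqfree_mono {a}, {0..n} - {a})"
  proof -
    have "(sqfree_mono {a, b})(b := sqfree_mono {a, b} b - 1) = sqfree_mono {a}"
      using ab by (auto simp: sqfree_mono_def fun_eq_iff)
    moreover have "insert b ?G = {0..n} - {a}" using ab by auto
    moreover have "{g\<in>?G. g < b} = {0..<b} - {a}" using ab by auto
    ultimately show ?thesis unfolding T_def using ab by simp
  qed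
  finally show ?thesis .
qed

(* The relations at x_0 x_1 and x_1 x_k force the coefficient at x_0 x_k to vanish. *)
lemma kdiff_top_eq_zero_if_supported_star_exceptional:
  fixes w :: "((nat \<Rightarrow> nat) \<times> nat set) \<Rightarrow> 'k::field"
  assumes n: "2 \<le> n" and w: "w \<in> kchains TYPE('k) {0..n} (star_ideal n) n (n + 1)"
    and supp: "\<And>b. b \<notin> star_exceptional n \<Longrightarrow> kdiff {0..n} (star_ideal n) n (n + 1) w b = 0"
  shows "kdiff {0..n} (star_ideal n) n (n + 1) w = 0"
proof
  fix x :: "(nat \<Rightarrow> nat) \<times> nat set"
  define u where "u a = w (sqfree_mono {a}, {0..n} - {a})" for a
  show "kdiff {0..n} (star_ideal n) n (n + 1) w x = 0 x"
  proof (cases "x \<in> star_exceptional n")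
    case False
    thus ?thesis using supp by simp
  next
    case True
    then obtain k where k: "k \<in> {2..n}" "x = pair_elem n 0 k" unfolding star_exceptional_def by auto
    have "u 1 + u 0 = 0"
      using kdiff_pair_elem[OF w, of 0 1] supp[OF pair_elem_notin_star_exceptional] n
      unfolding u_def by simp
    moreover have "u k = (-1) ^ (k - 1) * u 1"
    proof -
      have "- u k + (-1) ^ (k - 1) * u 1 = 0"
        using kdiff_pair_elem[OF w, of 1 k] supp[OF pair_elem_notin_star_exceptional] k(1)
        unfolding u_def by simp
      thus ?thesis by (simp add: neg_eq_iff_add_eq_0 add.commute)
    qed
    moreover have "kdiff {0..n} (star_ideal n) n (n + 1) w x = u k + (-1) ^ (k - 1) * u 0"
      using kdiff_pair_elem[OF w, of 0 k] k unfolding u_def by simp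
    ultimately show ?thesis by (simp flip: distrib_left)
  qed
qed

lemma star_cycle_eq_boundary_off_exceptional:
  fixes z :: "((nat \<Rightarrow> nat) \<times> nat set) \<Rightarrow> 'k::field"
  assumes n: "1 \<le> n" and i: "1 \<le> i" and z: "z \<in> kcycles {0..n} (star_ideal n) i (n + 1)"
    and b: "b \<notin> star_exceptional n \<inter> star_basis n i"
  shows "z b = kdiff {0..n} (star_ideal n) (i + 1) (n + 1)
      (koszul_homotopy star_pivot {0..n} (star_ideal n) i (n + 1) z) b"
proof (cases "b \<in> star_basis n i")
  case False
  thus ?thesis using z kdiff_outside_kbasis[of b _ _ "i + 1"]
    by (cases b) (auto simp: kcycles_def kchains_def)
next
  case True
  obtain m F where b_eq: "b = (m, F)" by (cases b)
  define v where "v = star_pivot (multideg m F)"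
  have mF: "(m, F) \<in> star_basis n i" using True b_eq by simp
  have "\<not> in_mono_ideal (star_ideal n) (m(v := Suc (m v)))" if "v \<in> F"
    using star_exceptional_if_pivot_raise_in_ideal[OF mF v_def[symmetric] that] b True b_eq
    by (auto simp: in_star_ideal_iff)
  thus ?thesis
    using z i mF star_pivot_le_multideg[OF mF n] unfolding b_eq v_def kcycles_def
    by (intro kdiff_koszul_homotopy[symmetric]) simp_all
qed

lemma betti_star_path_ideal_eq_card:
  assumes n: "2 \<le> n" and i: "1 \<le> i"
  shows "betti TYPE('k::field) {0..n} (star_ideal n) i (n + 1)
    = card (star_exceptional n \<inter> star_basis n i)"
proof (rule betti_eq_card_complement)
  show "\<exists>w \<in> kchains TYPE('k) {0..n} (star_ideal n) (i + 1) (n + 1).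
      \<forall>b. b \<notin> star_exceptional n \<inter> star_basis n i \<longrightarrow> z b = kdiff {0..n} (star_ideal n) (i + 1) (n + 1) w b"
    if "z \<in> kcycles {0..n} (star_ideal n) i (n + 1)" for z
  proof (intro bexI[OF _ koszul_homotopy_in_kchains] allI impI)
    fix b assume "b \<notin> star_exceptional n \<inter> star_basis n i"
    thus "z b = kdiff {0..n} (star_ideal n) (i + 1) (n + 1)
        (koszul_homotopy star_pivot {0..n} (star_ideal n) i (n + 1) z) b"
      using star_cycle_eq_boundary_off_exceptional[OF _ i that] n by simp
  qed
  show "kdiff {0..n} (star_ideal n) (i + 1) (n + 1) w = 0"
    if w: "w \<in> kchains TYPE('k) {0..n} (star_ideal n) (i + 1) (n + 1)"
      and supp: "\<And>b. b \<notin> star_exceptional n \<inter> star_basis n i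
        \<Longrightarrow> kdiff {0..n} (star_ideal n) (i + 1) (n + 1) w b = 0" for w
  proof (cases "i = n - 1")
    case True
    hence i_n: "i + 1 = n" using n by simp
    show ?thesis unfolding i_n
    proof (rule kdiff_top_eq_zero_if_supported_star_exceptional[OF n])
      show "w \<in> kchains TYPE('k) {0..n} (star_ideal n) n (n + 1)" using w i_n by simp
      fix b assume "b \<notin> star_exceptional n"
      thus "kdiff {0..n} (star_ideal n) n (n + 1) w b = 0" using supp[of b] i_n by simp
    qed
  next
    case False
    hence "star_exceptional n \<inter> star_basis n i = {}" using star_exceptional_Int_star_basis[of n i] by simp
    thus ?thesis using supp by (simp add: fun_eq_iff)
  qed
next
  show "kdiff {0..n} (star_ideal n) i (n + 1) c = 0"
    if "\<And>b. b \<notin> star_exceptional n \<inter> star_basis n i \<Longrightarrow> c b = 0" for c :: "_ \<Rightarrow> 'k"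
    using that by (rule kdiff_supported_star_exceptional)
qed auto

theorem mainTheorem15:
  fixes n i :: nat
  assumes "n \<ge> 2" and "i \<ge> 1"
  shows "betti TYPE('k::field) {0..n} (path3_gens {0..n} (star_edge n)) i (n + 1)
           = (if n + 1 = i + 2 then i else 0)"
proof -
  have "betti TYPE('k) {0..n} (star_ideal n) i (n + 1) = card (star_exceptional n \<inter> star_basis n i)"
    by (rule betti_star_path_ideal_eq_card) (use assms in simp_all)
  also have "\<dots> = (if i = n - 1 then n - 1 else 0)"
    unfolding star_exceptional_Int_star_basis by (simp add: card_star_exceptional)
  also have "\<dots> = (if n + 1 = i + 2 then i else 0)" using assms by auto
  finally show ?thesis .
qed

end
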